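(* $\mathrm{ChrMem}(\mathrm{RL}) > 1$.
   Context: Let $\Omega=\mathbb{N}\times\{0,1\}$ with partial order $(n,a)\preceq(m,b)$ iff $(n,a)=(m,b)$ or $n<m$. Let $\mathbb{M}$ be the set of all functions $f\colon\Omega\to\Omega$ monotone w.r.t. $\preceq$. The Rope Ladder condition $\mathrm{RL}\subseteq\mathbb{M}^\omega$ (a winning condition over the color set $\mathbb{M}$) consists of all sequences $(f_1,f_2,\ldots)\in\mathbb{M}^\omega$ for which there is $(N,b)\in\Omega$ with $f_n\circ\cdots\circ f_1((0,0))\preceq(N,b)$ for all $n\ge1$. Arenas, strategies and memory: an arena over a color set $C$ is a tuple $\langle V_P, V_A, E\rangle$ of finite sets with $V_P\cap V_A=\varnothing$, $V=V_P\cup V_A\neq\varnothing$, $E\subseteq V\times C\times V$, every node having an outgoing edge. Paths are non-empty finite/infinite sequences of consecutive edges, plus $0$-length paths $\lambda_v$ at each node. A Protagonist's strategy maps each finite path ending in $V_P$ to an outgoing edge of its last node; consistency of paths with a strategy is defined in the usual way. $S$ is winning from $u$ w.r.t. $W\subseteq C^\omega$ if every infinite path consistent with $S$ from $u$ has color sequence in $W$; $S$ is optimal w.r.t. $W$ if there is no node from which some strategy wins w.r.t. $W$ but $S$ does not. A memory structure is $\langle M,m_{init},\delta\rangle$ with $M$ finite and $\delta\colon M\times E\to M$ (extended to finite edge sequences); it is chromatic if $\delta(m,e)$ depends only on $m$ and the color of $e$. A strategy is built on top of it if its choice after a finite path depends only on the last node and the memory state reached from $m_{init}$ on that path. $\mathrm{ChrMem}(W)$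 is the least $k\in\mathbb{Z}^+$ such that every arena over $C$ admits a Protagonist's strategy built on top of a chromatic memory structure with $k$ states that is optimal w.r.t. $W$ ($+\infty$ if none exists). *)

theory Defs
  imports Main "HOL-Library.Extended_Nat"
begin

text \<open>Nodes and memory states are natural numbers (every finite arena / memory
structure is isomorphic to one of this form). An edge is a triple
(source, colour, target).\<close>

type_synonym 'c edge = "nat \<times> 'c \<times> nat"

definition src :: "'c edge \<Rightarrow> nat" where "src e = fst e"
definition col :: "'c edge \<Rightarrow> 'c" where "col e = fst (snd e)"
definition tgt :: "'c edge \<Rightarrow> nat" where "tgt e = snd (snd e)"

definition arena :: "'c set \<Rightarrow> nat set \<Rightarrow> nat set \<Rightarrow> 'c edge set \<Rightarrow> bool" where
  "arena C VP VA E \<longleftrightarrow> finite VP \<and> finite VA \<and> finite E \<and> VP \<inter> VA = {} \<and>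
     VP \<union> VA \<noteq> {} \<and> E \<subseteq> (VP \<union> VA) \<times> C \<times> (VP \<union> VA) \<and>
     (\<forall>v \<in> VP \<union> VA. \<exists>e \<in> E. src e = v)"

text \<open>A finite path is given by its start node u and its list of edges
(the empty list is the 0-length path at u).\<close>
definition fpath :: "nat set \<Rightarrow> 'c edge set \<Rightarrow> nat \<Rightarrow> 'c edge list \<Rightarrow> bool" where
  "fpath V E u es \<longleftrightarrow> u \<in> V \<and> set es \<subseteq> E \<and> (es \<noteq> [] \<longrightarrow> src (hd es) = u) \<and>
     (\<forall>i. Suc i < length es \<longrightarrow> tgt (es ! i) = src (es ! Suc i))"

definition lastnode :: "nat \<Rightarrow> 'c edge list \<Rightarrow> nat" where
  "lastnode u es = (if es = [] then u else tgt (last es))"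

definition ipath :: "'c edge set \<Rightarrow> nat \<Rightarrow> (nat \<Rightarrow> 'c edge) \<Rightarrow> bool" where
  "ipath E u \<rho> \<longleftrightarrow> (\<forall>n. \<rho> n \<in> E) \<and> src (\<rho> 0) = u \<and> (\<forall>n. tgt (\<rho> n) = src (\<rho> (Suc n)))"

definition prefix :: "(nat \<Rightarrow> 'c edge) \<Rightarrow> nat \<Rightarrow> 'c edge list" where
  "prefix \<rho> n = map \<rho> [0..<n]"

definition strategy :: "nat set \<Rightarrow> nat set \<Rightarrow> 'c edge set \<Rightarrow> (nat \<Rightarrow> 'c edge list \<Rightarrow> 'c edge) \<Rightarrow> bool" where
  "strategy VP VA E S \<longleftrightarrow> (\<forall>u es. fpath (VP \<union> VA) E u es \<and> lastnode u es \<in> VP \<longrightarrow>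
       S u es \<in> E \<and> src (S u es) = lastnode u es)"

definition consistent :: "nat set \<Rightarrow> (nat \<Rightarrow> 'c edge list \<Rightarrow> 'c edge) \<Rightarrow> nat \<Rightarrow> (nat \<Rightarrow> 'c edge) \<Rightarrow> bool" where
  "consistent VP S u \<rho> \<longleftrightarrow> (\<forall>n. lastnode u (prefix \<rho> n) \<in> VP \<longrightarrow> \<rho> n = S u (prefix \<rho> n))"

definition winning_from :: "nat set \<Rightarrow> 'c edge set \<Rightarrow> (nat \<Rightarrow> 'c edge list \<Rightarrow> 'c edge) \<Rightarrow> nat \<Rightarrow> (nat \<Rightarrow> 'c) set \<Rightarrow> bool" where
  "winning_from VP E S u W \<longleftrightarrow> (\<forall>\<rho>. ipath E u \<rho> \<and> consistent VP S u \<rho> \<longrightarrow> (\<lambda>n. col (\<rho> n)) \<in> W)"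

definition optimal :: "nat set \<Rightarrow> nat set \<Rightarrow> 'c edge set \<Rightarrow> (nat \<Rightarrow> 'c edge list \<Rightarrow> 'c edge) \<Rightarrow> (nat \<Rightarrow> 'c) set \<Rightarrow> bool" where
  "optimal VP VA E S W \<longleftrightarrow> \<not> (\<exists>u \<in> VP \<union> VA. (\<exists>S'. strategy VP VA E S' \<and> winning_from VP E S' u W)
       \<and> \<not> winning_from VP E S u W)"

definition mem_struct :: "'c edge set \<Rightarrow> nat set \<Rightarrow> nat \<Rightarrow> (nat \<Rightarrow> 'c edge \<Rightarrow> nat) \<Rightarrow> bool" where
  "mem_struct E M m0 \<delta> \<longleftrightarrow> finite M \<and> m0 \<in> M \<and> (\<forall>m \<in> M. \<forall>e \<in> E. \<delta> m e \<in> M)"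

definition chromatic :: "'c edge set \<Rightarrow> nat set \<Rightarrow> (nat \<Rightarrow> 'c edge \<Rightarrow> nat) \<Rightarrow> bool" where
  "chromatic E M \<delta> \<longleftrightarrow> (\<forall>m \<in> M. \<forall>e \<in> E. \<forall>e' \<in> E. col e = col e' \<longrightarrow> \<delta> m e = \<delta> m e')"

definition delta_star :: "(nat \<Rightarrow> 'c edge \<Rightarrow> nat) \<Rightarrow> nat \<Rightarrow> 'c edge list \<Rightarrow> nat" where
  "delta_star \<delta> m es = foldl \<delta> m es"

definition built_on :: "nat set \<Rightarrow> nat set \<Rightarrow> 'c edge set \<Rightarrow> nat \<Rightarrow> (nat \<Rightarrow> 'c edge \<Rightarrow> nat)
    \<Rightarrow> (nat \<Rightarrow> 'c edge list \<Rightarrow> 'c edge) \<Rightarrow> bool" where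
  "built_on VP VA E m0 \<delta> S \<longleftrightarrow> (\<forall>u es u' es'.
      fpath (VP \<union> VA) E u es \<and> lastnode u es \<in> VP \<and> fpath (VP \<union> VA) E u' es' \<and>
      lastnode u es = lastnode u' es' \<and> delta_star \<delta> m0 es = delta_star \<delta> m0 es'
      \<longrightarrow> S u es = S u' es')"

definition chr_mem_suffices :: "'c set \<Rightarrow> (nat \<Rightarrow> 'c) set \<Rightarrow> nat \<Rightarrow> bool" where
  "chr_mem_suffices C W k \<longleftrightarrow> (\<forall>VP VA E. arena C VP VA E \<longrightarrow>
     (\<exists>M m0 \<delta> S. mem_struct E M m0 \<delta> \<and> chromatic E M \<delta> \<and> card M = k \<and>
        strategy VP VA E S \<and> built_on VP VA E m0 \<delta> S \<and> optimal VP VA E S W))"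

definition ChrMem :: "'c set \<Rightarrow> (nat \<Rightarrow> 'c) set \<Rightarrow> enat" where
  "ChrMem C W = (if \<exists>k. k \<ge> 1 \<and> chr_mem_suffices C W k
                 then enat (LEAST k. k \<ge> 1 \<and> chr_mem_suffices C W k) else \<infinity>)"

text \<open>Omega = N x {0,1}, with {0,1} represented by bool (False = 0, True = 1).\<close>
type_synonym omega = "nat \<times> bool"

definition prec :: "omega \<Rightarrow> omega \<Rightarrow> bool" where
  "prec x y \<longleftrightarrow> x = y \<or> fst x < fst y"

definition MM :: "(omega \<Rightarrow> omega) set" where
  "MM = {f. monotone prec prec f}"

text \<open>comp_seq c n = c (n-1) o ... o c 0 (colour sequences are indexed from 0, so c 0 = f_1).\<close>
primrec comp_seq :: "(nat \<Rightarrow> omega \<Rightarrow> omega) \<Rightarrow> nat \<Rightarrow> omega \<Rightarrow> omega" where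
  "comp_seq c 0 = id"
| "comp_seq c (Suc n) = c n \<circ> comp_seq c n"

definition RL :: "(nat \<Rightarrow> omega \<Rightarrow> omega) set" where
  "RL = {c. (\<forall>i. c i \<in> MM) \<and> (\<exists>N b. \<forall>n \<ge> 1. prec (comp_seq c n (0, False)) (N, b))}"

end

theory Submission
  imports Defs
begin

text \<open>Consider the arena with a single Protagonist node and two self-loops, coloured by the
monotone maps go True and go False, where go b moves a point of \<Omega> to side b and climbs one
rung if it already was on side b. Repeating one colour climbs the
ladder forever, whereas alternating the two colours stays on rung 0, so the Protagonist wins,
but only by alternating. With one memory state a strategy can only repeat a single edge.\<close>

lemma delta_star_in_mem:
  assumes "mem_struct E M m0 \<delta>" and "m \<in> M" and "set es \<subseteq> E"
  shows "delta_star \<delta> m es \<in> M"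
  using assms unfolding delta_star_def
  by (induction es arbitrary: m) (auto simp: mem_struct_def)

lemma built_on_one_state_positional:
  assumes "mem_struct E M m0 \<delta>" and "card M = 1" and "built_on VP VA E m0 \<delta> S"
    and "fpath (VP \<union> VA) E u es" and "fpath (VP \<union> VA) E u' es'"
    and "lastnode u es \<in> VP" and "lastnode u es = lastnode u' es'"
  shows "S u es = S u' es'"
proof -
  obtain m where "M = {m}" using \<open>card M = 1\<close> by (rule card_1_singletonE)
  moreover have "set es \<subseteq> E" and "set es' \<subseteq> E" using assms(4,5) by (auto simp: fpath_def)
  ultimately have "delta_star \<delta> m0 es = delta_star \<delta> m0 es'"
    using delta_star_in_mem[OF assms(1)] assms(1) by (simp add: mem_struct_def)
  with assms(3-) show ?thesis unfolding built_on_def by blast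
qed

lemma ChrMem_gt_1_if_one_state_insufficient:
  assumes "\<not> chr_mem_suffices C W 1"
  shows "ChrMem C W > 1"
proof (cases "\<exists>k. k \<ge> 1 \<and> chr_mem_suffices C W k")
  case True
  let ?k = "LEAST k. k \<ge> 1 \<and> chr_mem_suffices C W k"
  have "?k \<ge> 1 \<and> chr_mem_suffices C W ?k" using True by (rule LeastI_ex)
  with assms have "?k > 1" by (metis le_neq_implies_less)
  with True show ?thesis by (simp add: ChrMem_def one_enat_def)
next
  case False
  then show ?thesis unfolding ChrMem_def if_not_P[OF False] by simp
qed

definition loops :: "nat \<Rightarrow> 'c set \<Rightarrow> 'c edge set" where
  "loops v cs = (\<lambda>c. (v, c, v)) ` cs"

lemma src_tgt_loops:
  assumes "e \<in> loops v cs"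
  shows "src e = v" and "tgt e = v" and "col e \<in> cs"
  using assms by (auto simp: loops_def src_def tgt_def col_def)

lemma arena_loops:
  assumes "finite cs" and "cs \<noteq> {}" and "cs \<subseteq> C"
  shows "arena C {v} {} (loops v cs)"
  using assms unfolding arena_def loops_def by (auto simp: src_def)

lemma lastnode_loops:
  assumes "set es \<subseteq> loops v cs"
  shows "lastnode v es = v"
  using assms src_tgt_loops(2) unfolding lastnode_def by (metis last_in_set subsetD)

lemma fpath_loops_iff:
  "fpath {v} (loops v cs) u es \<longleftrightarrow> u = v \<and> set es \<subseteq> loops v cs"
proof -
  have "tgt (es ! i) = src (es ! Suc i)"
    if "set es \<subseteq> loops v cs" and "Suc i < length es" for i
  proof -
    have "es ! i \<in> loops v cs" and "es ! Suc i \<in> loops v cs"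
      using that by (auto intro: nth_mem)
    then show ?thesis by (simp add: src_tgt_loops(1,2))
  qed
  moreover have "src (hd es) = v" if "set es \<subseteq> loops v cs" and "es \<noteq> []"
    using that hd_in_set[of es] src_tgt_loops(1) by blast
  ultimately show ?thesis unfolding fpath_def by auto
qed

lemma prefix_in_loops:
  assumes "\<And>n. \<rho> n \<in> loops v cs"
  shows "set (prefix \<rho> n) \<subseteq> loops v cs"
  using assms by (auto simp: prefix_def)

lemma consistent_loops_iff:
  assumes "\<And>n. \<rho> n \<in> loops v cs"
  shows "consistent {v} S v \<rho> \<longleftrightarrow> (\<forall>n. \<rho> n = S v (prefix \<rho> n))"
  using lastnode_loops[OF prefix_in_loops[OF assms]] by (simp add: consistent_def)

lemma strategy_loops_of_seq:
  assumes "\<And>n. \<sigma> n \<in> cs"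
  shows "strategy {v} {} (loops v cs) (\<lambda>u es. (v, \<sigma> (length es), v))"
  using assms by (auto simp: strategy_def fpath_loops_iff lastnode_loops loops_def src_def)

lemma winning_from_loops_of_seq:
  assumes "\<sigma> \<in> W"
  shows "winning_from {v} (loops v cs) (\<lambda>u es. (v, \<sigma> (length es), v)) v W"
  unfolding winning_from_def
proof (intro allI impI)
  fix \<rho> assume \<rho>: "ipath (loops v cs) v \<rho> \<and> consistent {v} (\<lambda>u es. (v, \<sigma> (length es), v)) v \<rho>"
  have in_loops: "\<And>n. \<rho> n \<in> loops v cs" using \<rho> by (simp add: ipath_def)
  from \<rho> have "consistent {v} (\<lambda>u es. (v, \<sigma> (length es), v)) v \<rho>" ..
  then have "\<rho> n = (v, \<sigma> n, v)" for n
    by (simp add: consistent_loops_iff[OF in_loops] prefix_def)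
  then have "(\<lambda>n. col (\<rho> n)) = \<sigma>" by (simp add: col_def)
  with assms show "(\<lambda>n. col (\<rho> n)) \<in> W" by simp
qed

lemma winning_from_loops_positional:
  assumes "winning_from {v} (loops v cs) S v W" and "e \<in> loops v cs"
    and "\<And>es. set es \<subseteq> loops v cs \<Longrightarrow> S v es = e"
  shows "(\<lambda>_. col e) \<in> W"
proof -
  have "ipath (loops v cs) v (\<lambda>_. e)"
    using assms(2) by (simp add: ipath_def src_tgt_loops)
  moreover have "consistent {v} S v (\<lambda>_. e)"
  proof -
    have in_loops: "\<And>n. (\<lambda>_. e) n \<in> loops v cs" using assms(2) by simp
    show ?thesis
      using assms(3)[OF prefix_in_loops[OF in_loops]] by (simp add: consistent_loops_iff[OF in_loops])
  qed
  ultimately show ?thesis using assms(1) unfolding winning_from_def by blast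
qed

lemma one_state_insufficient_loops:
  assumes "finite cs" and "cs \<subseteq> C" and "\<And>n. \<sigma> n \<in> cs" and "\<sigma> \<in> W"
    and "\<And>c. c \<in> cs \<Longrightarrow> (\<lambda>_. c) \<notin> W"
  shows "\<not> chr_mem_suffices C W 1"
proof
  assume "chr_mem_suffices C W 1"
  moreover have "arena C {0} {} (loops 0 cs)"
    using assms(1-3) by (intro arena_loops) auto
  ultimately obtain M m0 \<delta> S where mem: "mem_struct (loops 0 cs) M m0 \<delta>" "card M = 1"
    and S: "strategy {0} {} (loops 0 cs) S" "built_on {0} {} (loops 0 cs) m0 \<delta> S"
    and opt: "optimal {0} {} (loops 0 cs) S W"
    unfolding chr_mem_suffices_def by blast
  have "winning_from {0} (loops 0 cs) S 0 W"
    using opt strategy_loops_of_seq[where \<sigma> = \<sigma> and v = 0, OF assms(3)]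
      winning_from_loops_of_seq[OF assms(4), where v = 0 and cs = cs]
    unfolding optimal_def by auto
  moreover have "S 0 [] \<in> loops 0 cs"
    using S(1) by (simp add: strategy_def fpath_loops_iff lastnode_def)
  moreover have "S 0 es = S 0 []" if "set es \<subseteq> loops 0 cs" for es
    using that by (intro built_on_one_state_positional[OF mem S(2)])
      (simp_all add: fpath_loops_iff lastnode_loops)
  ultimately have "(\<lambda>_. col (S 0 [])) \<in> W"
    by (rule winning_from_loops_positional)
  with assms(5) src_tgt_loops(3) \<open>S 0 [] \<in> loops 0 cs\<close> show False by blast
qed

definition go :: "bool \<Rightarrow> omega \<Rightarrow> omega" where
  "go b x = (if snd x = b then (Suc (fst x), b) else (fst x, b))"

lemma go_in_MM: "go b \<in> MM"
  unfolding MM_def monotone_def prec_def go_def by auto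

lemma comp_seq_go_const:
  "comp_seq (\<lambda>_. go b) (Suc n) x = (fst x + n + (if snd x = b then 1 else 0), b)"
  by (induction n) (auto simp: go_def)

lemma go_const_notin_RL: "(\<lambda>_. go b) \<notin> RL"
proof
  assume "(\<lambda>_. go b) \<in> RL"
  then obtain N b' where "prec (comp_seq (\<lambda>_. go b) (Suc (Suc N)) (0, False)) (N, b')"
    unfolding RL_def by fastforce
  then show False by (simp only: comp_seq_go_const) (simp add: prec_def)
qed

lemma comp_seq_go_alternating: "comp_seq (\<lambda>n. go (even n)) n (0, False) = (0, odd n)"
  by (induction n) (auto simp: go_def)

lemma go_alternating_in_RL: "(\<lambda>n. go (even n)) \<in> RL"
  unfolding RL_def by (auto simp: go_in_MM comp_seq_go_alternating prec_def)

theorem fact1: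
  shows "ChrMem MM RL > 1"
proof (rule ChrMem_gt_1_if_one_state_insufficient)
  show "\<not> chr_mem_suffices MM RL 1"
  proof (rule one_state_insufficient_loops[where \<sigma> = "\<lambda>n. go (even n)"])
    show "{go True, go False} \<subseteq> MM" by (simp add: go_in_MM)
    show "(\<lambda>n. go (even n)) \<in> RL" by (rule go_alternating_in_RL)
    show "(\<lambda>_. c) \<notin> RL" if "c \<in> {go True, go False}" for c
      using that go_const_notin_RL by blast
    show "go (even n) \<in> {go True, go False}" for n by (cases "even n") auto
  qed simp
qed

end
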